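(* Let $r\ge5$. There is a constant $C$ depending only on $r$ such that the following holds. Let $T$ be a $K_r$-tree and $G$ a graph with $x=|V(T)\cap V(G)|$. Let $E_*$ be the set of edges of $T$ that are contained in some copy of $K_r$ completed by the $K_r$-dynamics started from $G\cup T$. Then $|E_*|\le Cx$.
   Context: A graph $T$ is a $K_r$-tree if it is the union of copies $H_1,\dots,H_\vartheta$ of $K_r$ such that for each $1<i\le\vartheta$, $H_i$ shares exactly one edge with $H_1\cup\cdots\cup H_{i-1}$ (the common vertices being exactly the two endpoints of that edge). The $K_r$-dynamics on a graph repeatedly adds an edge $e$ whenever there is a copy of $K_r$ (on the vertex set of the graph) in which $e$ is the only missing edge; such a copy is said to be completed by the dynamics (when $e$ is added). *)

theory Defs
  imports Complex_Main
begin

definition edges_of :: "'a set \<Rightarrow> 'a set set" where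
  "edges_of S = {e. e \<subseteq> S \<and> card e = 2}"

definition graph :: "'a set \<Rightarrow> 'a set set \<Rightarrow> bool" where
  "graph V E \<longleftrightarrow> finite V \<and> (\<forall>e\<in>E. e \<subseteq> V \<and> card e = 2)"

text \<open>A K_r-tree given by the vertex sets H_1,...,H_theta of its K_r copies (as a list).\<close>
definition Kr_tree_seq :: "nat \<Rightarrow> 'a set list \<Rightarrow> bool" where
  "Kr_tree_seq r Hs \<longleftrightarrow> Hs \<noteq> [] \<and>
     (\<forall>i<length Hs. finite (Hs!i) \<and> card (Hs!i) = r) \<and>
     (\<forall>i. 0 < i \<and> i < length Hs \<longrightarrow>
        (\<exists>u v. u \<noteq> v \<and> Hs!i \<inter> (\<Union>j<i. Hs!j) = {u, v} \<and>
               {u, v} \<in> (\<Union>j<i. edges_of (Hs!j))))"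

definition tree_vertices :: "'a set list \<Rightarrow> 'a set" where
  "tree_vertices Hs = \<Union>(set Hs)"

definition tree_edges :: "'a set list \<Rightarrow> 'a set set" where
  "tree_edges Hs = (\<Union>H\<in>set Hs. edges_of H)"

definition dyn_step :: "nat \<Rightarrow> 'a set \<Rightarrow> 'a set set \<Rightarrow> 'a set set \<Rightarrow> bool" where
  "dyn_step r V F F' \<longleftrightarrow> (\<exists>S e. S \<subseteq> V \<and> card S = r \<and> e \<in> edges_of S \<and> e \<notin> F \<and>
      (\<forall>f\<in>edges_of S. f \<noteq> e \<longrightarrow> f \<in> F) \<and> F' = insert e F)"

definition completed_copy :: "nat \<Rightarrow> 'a set \<Rightarrow> 'a set set \<Rightarrow> 'a set \<Rightarrow> bool" where
  "completed_copy r V E S \<longleftrightarrow> S \<subseteq> V \<and> card S = r \<and>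
     (\<exists>F e. (dyn_step r V)\<^sup>*\<^sup>* E F \<and> e \<in> edges_of S \<and> e \<notin> F \<and>
            (\<forall>f\<in>edges_of S. f \<noteq> e \<longrightarrow> f \<in> F))"

end

theory Submission
  imports Defs
begin

text \<open>Write X for the common vertices of T and G. Inside V(T), grow X to a core K such that no
  tree vertex outside K has r - 2 tree-neighbours in K, and no two blocks glued along an edge
  outside K both meet K. The growth is controlled by the potential 2 e(Y) - (r + 1) |Y| - 2 c(Y),
  where e(Y) and c(Y) count the edges and components of T[Y]: the density bound
  2 e(Y) \<le> (r + 1) |Y| of K_r-trees makes it nonpositive, it is at least -(r + 3) |X| on X, and
  every violation of the two conditions is repaired by adding at most 2r - 4 vertices while
  raising the potential by at least 1; hence |K| = O(|X|). With W the union of V(G) and K, the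
  tree edges together with all pairs inside W form an edge set that the K_r-dynamics never
  leaves, and this forces every completed copy of K_r to meet V(T) only inside K. So the edges
  counted in E_* are tree edges inside K, and the density bound gives |E_*| \<le> (r + 1) |K|.\<close>

section \<open>Edge sets of complete graphs\<close>

lemma edges_of_mono: "A \<subseteq> B \<Longrightarrow> edges_of A \<subseteq> edges_of B"
  unfolding edges_of_def by auto

lemma finite_edges_of: "finite A \<Longrightarrow> finite (edges_of A)"
  unfolding edges_of_def by (rule finite_subset[of _ "Pow A"]) auto

lemma card_edges_of: "finite A \<Longrightarrow> card (edges_of A) = card A choose 2"
  unfolding edges_of_def by (rule n_subsets)

lemma edges_of_Int: "edges_of (A \<inter> B) = edges_of A \<inter> edges_of B"
  unfolding edges_of_def by auto

lemma doubleton_in_edges_of [simp]: "{x, y} \<in> edges_of A \<longleftrightarrow> x \<in> A \<and> y \<in> A \<and> x \<noteq> y"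
  unfolding edges_of_def by (auto simp: card_insert_if)

lemma edges_ofE:
  assumes "e \<in> edges_of A"
  obtains x y where "x \<noteq> y" "e = {x, y}" "x \<in> A" "y \<in> A"
  using assms unfolding edges_of_def by (auto simp: card_2_iff)

lemma edges_of_doubleton: "x \<noteq> y \<Longrightarrow> edges_of {x, y} = {{x, y}}"
  unfolding edges_of_def by (auto simp: card_2_iff)

lemma card_edges_of_Diff:
  "finite B \<Longrightarrow> card (edges_of B - edges_of Y) = (card B choose 2) - (card (B \<inter> Y) choose 2)"
  by (metis card_Diff_subset_Int card_edges_of edges_of_Int finite_Int finite_edges_of)

lemma two_mult_choose_two: "2 * (n choose 2) = n * (n - 1)"
proof (induction n)
  case (Suc n)
  then show ?case by (cases n) (auto simp: numeral_2_eq_2 algebra_simps)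
qed simp

lemma card_le_2_if_subset_doubleton: "A \<subseteq> {u, v} \<Longrightarrow> card A \<le> 2"
proof -
  assume "A \<subseteq> {u, v}"
  then have "card A \<le> card {u, v}" by (intro card_mono) auto
  also have "\<dots> \<le> 2" by (simp add: card_insert_if)
  finally show ?thesis .
qed

lemma card_le_2_cases:
  assumes "finite A" "card A \<le> 2"
  shows "A = {} \<or> (\<exists>a. A = {a}) \<or> (\<exists>a b. a \<noteq> b \<and> A = {a, b})"
proof -
  consider "card A = 0" | "card A = 1" | "card A = 2" using assms(2) by linarith
  then show ?thesis
  proof cases
    case 1
    then show ?thesis using assms(1) by simp
  next
    case 2
    then show ?thesis by (simp add: card_1_singleton_iff)
  next
    case 3
    then show ?thesis unfolding card_2_iff by blast
  qed
qed

section \<open>Structure of K_r-trees\<close>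

lemma tree_vertices_snoc: "tree_vertices (Hs @ [H]) = tree_vertices Hs \<union> H"
  unfolding tree_vertices_def by auto

lemma tree_edges_snoc: "tree_edges (Hs @ [H]) = tree_edges Hs \<union> edges_of H"
  unfolding tree_edges_def by auto

lemma block_subset_tree_vertices: "B \<in> set Hs \<Longrightarrow> B \<subseteq> tree_vertices Hs"
  unfolding tree_vertices_def by auto

lemma edges_of_block_subset: "B \<in> set Hs \<Longrightarrow> edges_of B \<subseteq> tree_edges Hs"
  unfolding tree_edges_def by auto

lemma tree_edges_subset: "tree_edges Hs \<subseteq> edges_of (tree_vertices Hs)"
  unfolding tree_edges_def using block_subset_tree_vertices edges_of_mono by blast

lemma tree_edge_vertices:
  "{x, y} \<in> tree_edges Hs \<Longrightarrow> x \<in> tree_vertices Hs \<and> y \<in> tree_vertices Hs \<and> x \<noteq> y"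
  by (metis doubleton_in_edges_of subsetD tree_edges_subset)

lemma finite_block: "Kr_tree_seq r Hs \<Longrightarrow> B \<in> set Hs \<Longrightarrow> finite B"
  unfolding Kr_tree_seq_def by (auto simp: in_set_conv_nth)

lemma card_block: "Kr_tree_seq r Hs \<Longrightarrow> B \<in> set Hs \<Longrightarrow> card B = r"
  unfolding Kr_tree_seq_def by (auto simp: in_set_conv_nth)

lemma finite_tree_vertices: "Kr_tree_seq r Hs \<Longrightarrow> finite (tree_vertices Hs)"
  unfolding tree_vertices_def using finite_block by blast

locale Kr_tree_extension =
  fixes r :: nat and Hs :: "'a set list" and H :: "'a set" and u v :: 'a
  assumes finite_new: "finite H" and card_new: "card H = r"
    and glue_neq: "u \<noteq> v" and glue_vertices: "H \<inter> tree_vertices Hs = {u, v}"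
    and glue_edge: "{u, v} \<in> tree_edges Hs"
begin

abbreviation new_vertices :: "'a set" where "new_vertices \<equiv> H - {u, v}"

lemma glue_mem: "u \<in> H" "v \<in> H" "u \<in> tree_vertices Hs" "v \<in> tree_vertices Hs"
  using glue_vertices by auto

lemma new_vertex_notin: "x \<in> new_vertices \<Longrightarrow> x \<notin> tree_vertices Hs"
  using glue_vertices by auto

lemma card_new_vertices: "card new_vertices = r - 2"
  using finite_new card_new glue_mem glue_neq by (simp add: card_Diff_subset)

lemma new_vertex_adjacent_iff:
  assumes "x \<in> new_vertices"
  shows "{x, y} \<in> tree_edges (Hs @ [H]) \<longleftrightarrow> y \<in> H \<and> y \<noteq> x"
  using assms new_vertex_notin[OF assms] tree_edge_vertices[of x y Hs]
  by (auto simp: tree_edges_snoc)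

lemma old_vertices_adjacent_iff:
  assumes "x \<notin> new_vertices" "y \<notin> new_vertices"
  shows "{x, y} \<in> tree_edges (Hs @ [H]) \<longleftrightarrow> {x, y} \<in> tree_edges Hs"
  using assms glue_edge by (auto simp: tree_edges_snoc doubleton_eq_iff insert_commute)

end

lemma Kr_tree_seq_snoc:
  assumes "Kr_tree_seq r (Hs @ [H])" "Hs \<noteq> []"
  obtains u v where "Kr_tree_seq r Hs" "Kr_tree_extension r Hs H u v"
proof -
  let ?Gs = "Hs @ [H]"
  have prefix: "(\<Union>j<i. f (?Gs ! j)) = (\<Union>j<i. f (Hs ! j))" if "i \<le> length Hs"
    for i and f :: "'a set \<Rightarrow> 'b set"
    using that by (auto simp: nth_append)
  have whole: "(\<Union>j<length Hs. f (Hs ! j)) = (\<Union>B\<in>set Hs. f B)" for f :: "'a set \<Rightarrow> 'b set"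
    by (auto simp: in_set_conv_nth intro: nth_mem)
  have blocks: "finite (?Gs ! i) \<and> card (?Gs ! i) = r" if "i < length ?Gs" for i
    using assms(1) that unfolding Kr_tree_seq_def by blast
  have glued: "\<exists>u v. u \<noteq> v \<and> ?Gs ! i \<inter> (\<Union>j<i. Hs ! j) = {u, v} \<and>
      {u, v} \<in> (\<Union>j<i. edges_of (Hs ! j))" if "0 < i" "i \<le> length Hs" for i
  proof -
    have "0 < i \<and> i < length ?Gs" using that by simp
    with assms(1) have "\<exists>u v. u \<noteq> v \<and> ?Gs ! i \<inter> (\<Union>j<i. ?Gs ! j) = {u, v} \<and>
        {u, v} \<in> (\<Union>j<i. edges_of (?Gs ! j))"
      unfolding Kr_tree_seq_def by blast
    then show ?thesis using prefix[OF that(2), of "\<lambda>B. B"] prefix[OF that(2), of edges_of] by simp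
  qed
  have old: "?Gs ! i = Hs ! i" if "i < length Hs" for i
    using that by (simp add: nth_append)
  have "Kr_tree_seq r Hs"
    unfolding Kr_tree_seq_def
  proof (intro conjI allI impI)
    fix i
    assume "i < length Hs"
    then show "finite (Hs ! i)" "card (Hs ! i) = r" using blocks[of i] old[of i] by simp_all
  next
    fix i
    assume "0 < i \<and> i < length Hs"
    then show "\<exists>u v. u \<noteq> v \<and> Hs ! i \<inter> (\<Union>j<i. Hs ! j) = {u, v} \<and>
        {u, v} \<in> (\<Union>j<i. edges_of (Hs ! j))"
      using glued[of i] old[of i] by simp
  qed (rule assms(2))
  moreover have "(\<Union>j<length Hs. Hs ! j) = tree_vertices Hs"
    "(\<Union>j<length Hs. edges_of (Hs ! j)) = tree_edges Hs"
    using whole[of "\<lambda>B. B"] whole[of edges_of] unfolding tree_vertices_def tree_edges_def by simp_all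
  then obtain u v where "u \<noteq> v" "H \<inter> tree_vertices Hs = {u, v}" "{u, v} \<in> tree_edges Hs"
    using glued[of "length Hs"] assms(2) by auto
  moreover have "finite H" "card H = r" using blocks[of "length Hs"] by auto
  ultimately show ?thesis using that by (simp add: Kr_tree_extension_def)
qed

lemma Kr_tree_induct [consumes 1, case_names single extend]:
  assumes "Kr_tree_seq r Hs"
    and "\<And>H. finite H \<Longrightarrow> card H = r \<Longrightarrow> P [H]"
    and "\<And>Hs H u v. Kr_tree_seq r Hs \<Longrightarrow> P Hs \<Longrightarrow> Kr_tree_extension r Hs H u v \<Longrightarrow> P (Hs @ [H])"
  shows "P Hs"
  using assms(1)
proof (induction Hs rule: rev_induct)
  case Nil
  then show ?case unfolding Kr_tree_seq_def by simp
next
  case (snoc H Hs)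
  show ?case
  proof (cases "Hs = []")
    case True
    then show ?thesis using snoc.prems assms(2) unfolding Kr_tree_seq_def by auto
  next
    case False
    with snoc.prems obtain u v where "Kr_tree_seq r Hs" "Kr_tree_extension r Hs H u v"
      by (rule Kr_tree_seq_snoc)
    then show ?thesis using assms(3) snoc.IH by blast
  qed
qed

lemma card_block_Int_le_2:
  assumes "Kr_tree_seq r Hs" "B \<in> set Hs" "B' \<in> set Hs" "B \<noteq> B'"
  shows "card (B \<inter> B') \<le> 2"
  using assms
proof (induction Hs arbitrary: B B' rule: Kr_tree_induct)
  case (single H)
  then show ?case by simp
next
  case (extend Hs H u v)
  interpret Kr_tree_extension r Hs H u v by fact
  have "card (H \<inter> C) \<le> 2" if "C \<in> set Hs" for C
    using block_subset_tree_vertices[OF that] glue_vertices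
    by (intro card_le_2_if_subset_doubleton) auto
  then show ?case using extend by (auto simp: Int_commute)
qed

lemma clique_in_block:
  assumes "Kr_tree_seq r Hs" "Q \<subseteq> tree_vertices Hs"
    and "\<And>x y. x \<in> Q \<Longrightarrow> y \<in> Q \<Longrightarrow> x \<noteq> y \<Longrightarrow> {x, y} \<in> tree_edges Hs"
  shows "\<exists>B\<in>set Hs. Q \<subseteq> B"
  using assms
proof (induction Hs arbitrary: Q rule: Kr_tree_induct)
  case (single H)
  then show ?case by (simp add: tree_vertices_def)
next
  case (extend Hs H u v)
  interpret Kr_tree_extension r Hs H u v by fact
  show ?case
  proof (cases "Q \<inter> new_vertices = {}")
    case True
    then have "Q \<subseteq> tree_vertices Hs"
      using extend.prems(1) glue_mem by (auto simp: tree_vertices_snoc)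
    moreover have "{x, y} \<in> tree_edges Hs" if "x \<in> Q" "y \<in> Q" "x \<noteq> y" for x y
      using extend.prems(2)[OF that] old_vertices_adjacent_iff True that by blast
    ultimately show ?thesis using extend.IH by auto
  next
    case False
    then obtain x where x: "x \<in> Q" "x \<in> new_vertices" by blast
    have "Q \<subseteq> H"
      using x new_vertex_adjacent_iff[OF x(2)] extend.prems(2)[OF x(1)] by blast
    then show ?thesis by auto
  qed
qed

context Kr_tree_extension
begin

lemma common_neighbours_of_new_vertex:
  assumes "p \<in> new_vertices" "p \<noteq> q" "{p, q} \<notin> tree_edges (Hs @ [H])"
  shows "{z. {p, z} \<in> tree_edges (Hs @ [H]) \<and> {q, z} \<in> tree_edges (Hs @ [H])} \<subseteq> {u, v}"
proof
  fix z
  assume z: "z \<in> {z. {p, z} \<in> tree_edges (Hs @ [H]) \<and> {q, z} \<in> tree_edges (Hs @ [H])}"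
  have "q \<notin> H" using assms new_vertex_adjacent_iff by blast
  have "z \<notin> new_vertices"
  proof
    assume "z \<in> new_vertices"
    then have "q \<in> H" using z new_vertex_adjacent_iff[of z q] by (simp add: insert_commute)
    with \<open>q \<notin> H\<close> show False ..
  qed
  moreover have "z \<in> H" using z new_vertex_adjacent_iff[OF assms(1)] by blast
  ultimately show "z \<in> {u, v}" by blast
qed

lemma common_neighbours_of_old_vertices:
  assumes "p \<notin> new_vertices" "q \<notin> new_vertices" "p \<noteq> q" "{p, q} \<noteq> {u, v}"
  shows "{z. {p, z} \<in> tree_edges (Hs @ [H]) \<and> {q, z} \<in> tree_edges (Hs @ [H])} =
    {z. {p, z} \<in> tree_edges Hs \<and> {q, z} \<in> tree_edges Hs}"
proof -
  have "z \<notin> new_vertices" if "{p, z} \<in> tree_edges (Hs @ [H])" "{q, z} \<in> tree_edges (Hs @ [H])" for z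
  proof
    assume z: "z \<in> new_vertices"
    then have "p \<in> H" "q \<in> H"
      using that new_vertex_adjacent_iff[OF z, of p] new_vertex_adjacent_iff[OF z, of q]
      by (simp_all add: insert_commute)
    then show False using assms by auto
  qed
  then show ?thesis using assms(1,2) old_vertices_adjacent_iff by (auto simp: tree_edges_snoc)
qed

end

lemma card_common_neighbours_le_2:
  assumes "Kr_tree_seq r Hs" "p \<noteq> q" "{p, q} \<notin> tree_edges Hs"
  shows "card {z. {p, z} \<in> tree_edges Hs \<and> {q, z} \<in> tree_edges Hs} \<le> 2"
  using assms
proof (induction Hs arbitrary: p q rule: Kr_tree_induct)
  case (single H)
  have "{z. {p, z} \<in> tree_edges [H] \<and> {q, z} \<in> tree_edges [H]} = {}"
    using single.prems by (auto simp: tree_edges_def)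
  then show ?case by (metis card.empty zero_le)
next
  case (extend Hs H u v)
  interpret Kr_tree_extension r Hs H u v by fact
  let ?E = "tree_edges (Hs @ [H])"
  have swap: "{z. {q, z} \<in> ?E \<and> {p, z} \<in> ?E} = {z. {p, z} \<in> ?E \<and> {q, z} \<in> ?E}" by blast
  consider "p \<in> new_vertices" | "q \<in> new_vertices" | "p \<notin> new_vertices" "q \<notin> new_vertices"
    by blast
  then show ?case
  proof cases
    case 1
    show ?thesis
      using common_neighbours_of_new_vertex[OF 1 extend.prems] by (rule card_le_2_if_subset_doubleton)
  next
    case 2
    have "{q, p} \<notin> ?E" using extend.prems(2) by (simp add: insert_commute)
    with 2 extend.prems(1) have "{z. {q, z} \<in> ?E \<and> {p, z} \<in> ?E} \<subseteq> {u, v}"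
      by (intro common_neighbours_of_new_vertex) auto
    then show ?thesis unfolding swap by (rule card_le_2_if_subset_doubleton)
  next
    case 3
    have "{p, q} \<noteq> {u, v}" using extend.prems(2) glue_edge by (auto simp: tree_edges_snoc)
    then show ?thesis using common_neighbours_of_old_vertices 3 extend.prems extend.IH
      by (simp add: tree_edges_snoc)
  qed
qed

lemma card_le_2_if_common_neighbours:
  assumes "Kr_tree_seq r Hs" "p \<noteq> q" "{p, q} \<notin> tree_edges Hs"
    and "\<And>z. z \<in> Z \<Longrightarrow> {p, z} \<in> tree_edges Hs \<and> {q, z} \<in> tree_edges Hs"
  shows "card Z \<le> 2"
proof -
  let ?C = "{z. {p, z} \<in> tree_edges Hs \<and> {q, z} \<in> tree_edges Hs}"
  have "?C \<subseteq> tree_vertices Hs" using tree_edge_vertices[of p] by blast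
  then have "finite ?C" using finite_tree_vertices[OF assms(1)] by (rule finite_subset)
  moreover have "Z \<subseteq> ?C" using assms(4) by blast
  ultimately have "card Z \<le> card ?C" by (rule card_mono)
  also have "\<dots> \<le> 2" by (rule card_common_neighbours_le_2[OF assms(1-3)])
  finally show ?thesis .
qed

lemma two_mult_diff_choose_two:
  "2 * (((i + j) choose 2) - (i choose 2)) = j * (2 * i + j - 1)"
proof -
  have "(i + j) * (i + j - 1) = i * (i - 1) + j * (2 * i + j - 1)"
    by (cases i; cases j) (simp_all add: algebra_simps)
  then show ?thesis by (simp add: diff_mult_distrib2 two_mult_choose_two)
qed

context Kr_tree_extension
begin

lemma tree_edges_snoc_Int_subset:
  "tree_edges (Hs @ [H]) \<inter> edges_of Y \<subseteq>
    (tree_edges Hs \<inter> edges_of (Y - new_vertices)) \<union> (edges_of (H \<inter> Y) - edges_of {u, v})"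
proof
  fix e
  assume e: "e \<in> tree_edges (Hs @ [H]) \<inter> edges_of Y"
  show "e \<in> (tree_edges Hs \<inter> edges_of (Y - new_vertices)) \<union> (edges_of (H \<inter> Y) - edges_of {u, v})"
  proof (cases "e \<in> tree_edges Hs")
    case True
    then have "e \<in> edges_of (tree_vertices Hs)" using tree_edges_subset by blast
    then show ?thesis using True e new_vertex_notin unfolding edges_of_def by auto
  next
    case False
    then show ?thesis
      using e glue_edge by (auto simp: tree_edges_snoc edges_of_Int edges_of_doubleton[OF glue_neq])
  qed
qed

lemma card_new_edges_le:
  "2 * card (edges_of (H \<inter> Y) - edges_of {u, v}) \<le> (r + 1) * card (Y \<inter> new_vertices)"
proof -
  define i where "i = card (H \<inter> Y \<inter> {u, v})"
  define j where "j = card (Y \<inter> new_vertices)"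
  have "card (H \<inter> Y) = i + j"
    unfolding i_def j_def using finite_new glue_mem
    by (subst card_Un_disjoint[symmetric]) (auto intro: arg_cong[where f = card])
  then have "2 * card (edges_of (H \<inter> Y) - edges_of {u, v}) = j * (2 * i + j - 1)"
    using finite_new by (simp add: card_edges_of_Diff two_mult_diff_choose_two i_def)
  moreover have "j * (2 * i + j - 1) \<le> j * (r + 1)"
  proof -
    have "i \<le> 2" unfolding i_def by (rule card_le_2_if_subset_doubleton) auto
    moreover have "j \<le> r - 2"
      unfolding j_def using card_new_vertices finite_new by (metis card_mono finite_Diff inf_le2)
    ultimately have "j = 0 \<or> 2 * i + j - 1 \<le> r + 1" by linarith
    then show ?thesis by (metis mult_0 mult_le_mono2 order.refl)
  qed
  ultimately show ?thesis unfolding j_def by (simp add: mult.commute)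
qed

end

lemma tree_edge_density:
  assumes "Kr_tree_seq r Hs" "finite Y"
  shows "2 * card (tree_edges Hs \<inter> edges_of Y) \<le> (r + 1) * card Y"
  using assms
proof (induction Hs arbitrary: Y rule: Kr_tree_induct)
  case (single H)
  have "card (H \<inter> Y) \<le> r" "card (H \<inter> Y) \<le> card Y"
    using single by (metis card_mono inf_le1, simp add: card_mono)
  have "2 * card (tree_edges [H] \<inter> edges_of Y) = card (H \<inter> Y) * (card (H \<inter> Y) - 1)"
    using single by (simp add: tree_edges_def edges_of_Int[symmetric] card_edges_of two_mult_choose_two)
  also have "\<dots> \<le> (r + 1) * card Y"
    using \<open>card (H \<inter> Y) \<le> r\<close> \<open>card (H \<inter> Y) \<le> card Y\<close> by (intro mult_le_mono) auto
  finally show ?case .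
next
  case (extend Hs H u v)
  interpret Kr_tree_extension r Hs H u v by fact
  let ?Y' = "Y - new_vertices"
  have "card (tree_edges (Hs @ [H]) \<inter> edges_of Y) \<le>
      card (tree_edges Hs \<inter> edges_of ?Y') + card (edges_of (H \<inter> Y) - edges_of {u, v})"
    by (rule order_trans[OF card_mono[OF _ tree_edges_snoc_Int_subset] card_Un_le])
      (use extend.prems finite_new in \<open>simp add: finite_edges_of\<close>)
  moreover have "card Y = card ?Y' + card (Y \<inter> new_vertices)"
    using extend.prems by (metis card_Int_Diff add.commute)
  moreover have "2 * card (tree_edges Hs \<inter> edges_of ?Y') \<le> (r + 1) * card ?Y'"
    using extend.IH extend.prems by simp
  ultimately show ?case using card_new_edges_le[of Y] by (simp add: algebra_simps)
qed

section \<open>Connectivity inside a vertex set\<close>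

definition conn :: "'a set set \<Rightarrow> 'a set \<Rightarrow> 'a \<Rightarrow> 'a \<Rightarrow> bool" where
  "conn E Y = (\<lambda>x y. x \<in> Y \<and> y \<in> Y \<and> {x, y} \<in> E)\<^sup>*\<^sup>*"

definition component :: "'a set set \<Rightarrow> 'a set \<Rightarrow> 'a \<Rightarrow> 'a set" where
  "component E Y y = {z. conn E Y y z}"

definition components :: "'a set set \<Rightarrow> 'a set \<Rightarrow> 'a set set" where
  "components E Y = component E Y ` Y"

lemma conn_refl [simp]: "conn E Y a a"
  unfolding conn_def by simp

lemma conn_edge: "a \<in> Y \<Longrightarrow> b \<in> Y \<Longrightarrow> {a, b} \<in> E \<Longrightarrow> conn E Y a b"
  unfolding conn_def by auto

lemma conn_trans: "conn E Y a b \<Longrightarrow> conn E Y b c \<Longrightarrow> conn E Y a c"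
  unfolding conn_def by (rule rtranclp_trans)

lemma conn_sym: "conn E Y a b \<Longrightarrow> conn E Y b a"
  unfolding conn_def
proof (induction rule: rtranclp_induct)
  case (step y z)
  then have "(\<lambda>x y. x \<in> Y \<and> y \<in> Y \<and> {x, y} \<in> E) z y" by (simp add: insert_commute)
  then show ?case using step.IH by (rule converse_rtranclp_into_rtranclp)
qed simp

lemma conn_mono: "Y \<subseteq> Y' \<Longrightarrow> conn E Y a b \<Longrightarrow> conn E Y' a b"
  unfolding conn_def by (erule rtranclp_mono[THEN predicate2D, rotated]) auto

lemma component_eq_iff: "component E Y a = component E Y b \<longleftrightarrow> conn E Y a b"
proof
  assume eq: "component E Y a = component E Y b"
  have "b \<in> component E Y b" by (simp add: component_def)
  then have "b \<in> component E Y a" by (simp only: eq)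
  then show "conn E Y a b" by (simp add: component_def)
next
  assume "conn E Y a b"
  then show "component E Y a = component E Y b"
    unfolding component_def by (blast intro: conn_trans conn_sym)
qed

lemma card_components_le: "finite Y \<Longrightarrow> card (components E Y) \<le> card Y"
  unfolding components_def by (rule card_image_le)

lemma UN_component_superset:
  assumes "Y \<subseteq> Y'"
  shows "(\<Union>c\<in>component E Y y. component E Y' c) = component E Y' y"
proof
  show "(\<Union>c\<in>component E Y y. component E Y' c) \<subseteq> component E Y' y"
  proof
    fix x
    assume "x \<in> (\<Union>c\<in>component E Y y. component E Y' c)"
    then obtain c where "conn E Y y c" "conn E Y' c x" unfolding component_def by blast
    then show "x \<in> component E Y' y"
      using conn_trans[OF conn_mono[OF assms]] unfolding component_def by blast
  qed
  show "component E Y' y \<subseteq> (\<Union>c\<in>component E Y y. component E Y' c)"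
    unfolding component_def by force
qed

lemma components_superset:
  assumes "Y \<subseteq> Y'" "\<And>z. z \<in> Y' \<Longrightarrow> \<exists>y\<in>Y. conn E Y' y z"
  shows "components E Y' = (\<lambda>C. \<Union>c\<in>C. component E Y' c) ` components E Y"
proof -
  have "component E Y' z \<in> component E Y' ` Y" if "z \<in> Y'" for z
  proof -
    from assms(2)[OF that] obtain y where "y \<in> Y" "conn E Y' y z" by blast
    moreover from this have "component E Y' z = component E Y' y"
      by (simp add: component_eq_iff conn_sym)
    ultimately show ?thesis by blast
  qed
  then have "components E Y' = component E Y' ` Y"
    unfolding components_def using assms(1) by blast
  then show ?thesis
    unfolding components_def image_image UN_component_superset[OF assms(1)] by simp
qed

lemma conn_attached:
  assumes "\<And>z. z \<in> Z \<Longrightarrow> \<exists>y\<in>Y. {z, y} \<in> E" "z \<in> Y \<union> Z"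
  shows "\<exists>y\<in>Y. conn E (Y \<union> Z) y z"
proof (cases "z \<in> Y")
  case True
  then show ?thesis by (intro bexI[where x = z]) simp_all
next
  case False
  then obtain y where "y \<in> Y" "{z, y} \<in> E" using assms by blast
  then show ?thesis using assms(2) by (meson UnI1 conn_edge conn_sym)
qed

lemma card_components_union_le:
  assumes "finite Y" "\<And>z. z \<in> Z \<Longrightarrow> \<exists>y\<in>Y. {z, y} \<in> E"
  shows "card (components E (Y \<union> Z)) \<le> card (components E Y)"
proof -
  have "components E (Y \<union> Z) = (\<lambda>C. \<Union>c\<in>C. component E (Y \<union> Z) c) ` components E Y"
    using conn_attached[OF assms(2)] by (intro components_superset) auto
  then show ?thesis
    using assms(1) by (simp add: card_image_le components_def)
qed

lemma card_components_union_less: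
  assumes "finite Y" "\<And>z. z \<in> Z \<Longrightarrow> \<exists>y\<in>Y. {z, y} \<in> E"
    and "a \<in> Y" "b \<in> Y" "\<not> conn E Y a b" "conn E (Y \<union> Z) a b"
  shows "card (components E (Y \<union> Z)) < card (components E Y)"
proof -
  let ?merge = "\<lambda>C. \<Union>c\<in>C. component E (Y \<union> Z) c"
  have eq: "components E (Y \<union> Z) = ?merge ` components E Y"
    using conn_attached[OF assms(2)] by (intro components_superset) auto
  have "?merge (component E Y a) = ?merge (component E Y b)"
    using assms(6) component_eq_iff[of E "Y \<union> Z" a b] by (simp add: UN_component_superset)
  moreover have "component E Y a \<noteq> component E Y b" using assms(5) component_eq_iff by metis
  ultimately have "\<not> inj_on ?merge (components E Y)"
    using assms(3,4) unfolding components_def inj_on_def by blast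
  moreover have "finite (components E Y)" using assms(1) by (simp add: components_def)
  ultimately show ?thesis
    unfolding eq by (metis card_image_le inj_on_iff_eq_card le_neq_implies_less)
qed

context Kr_tree_extension
begin

lemma conn_leaving_new_vertices:
  assumes "conn (tree_edges (Hs @ [H])) Y a c" "a \<in> new_vertices" "c \<notin> new_vertices"
  shows "Y \<inter> {u, v} \<noteq> {}"
proof -
  have "c \<in> new_vertices \<or> Y \<inter> {u, v} \<noteq> {}"
    using assms(1) unfolding conn_def
  proof (induction rule: rtranclp_induct)
    case (step c d)
    then show ?case using new_vertex_adjacent_iff by blast
  qed (use assms(2) in simp)
  then show ?thesis using assms(3) by blast
qed

lemma conn_avoiding_new_vertices:
  assumes "conn (tree_edges (Hs @ [H])) Y a c" "a \<notin> new_vertices"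
  shows "(c \<notin> new_vertices \<longrightarrow> conn (tree_edges Hs) (Y - new_vertices) a c) \<and>
    (c \<in> new_vertices \<longrightarrow> (\<exists>w\<in>Y \<inter> {u, v}. conn (tree_edges Hs) (Y - new_vertices) a w))"
  using assms(1) unfolding conn_def[of "tree_edges (Hs @ [H])"]
proof (induction rule: rtranclp_induct)
  case base
  then show ?case using assms(2) by auto
next
  case (step c d)
  let ?conn = "conn (tree_edges Hs) (Y - new_vertices) a"
  have cd: "c \<in> Y" "d \<in> Y" "{c, d} \<in> tree_edges (Hs @ [H])" using step.hyps(2) by auto
  consider "c \<notin> new_vertices" "d \<notin> new_vertices" | "c \<notin> new_vertices" "d \<in> new_vertices"
    | "c \<in> new_vertices" "d \<in> new_vertices" | "c \<in> new_vertices" "d \<notin> new_vertices"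
    by blast
  then show ?case
  proof cases
    case 1
    then have "{c, d} \<in> tree_edges Hs" using old_vertices_adjacent_iff cd(3) by blast
    then have "conn (tree_edges Hs) (Y - new_vertices) c d" using 1 cd by (intro conn_edge) auto
    then have "?conn d" using step.IH 1(1) by (blast intro: conn_trans)
    then show ?thesis using 1(2) by blast
  next
    case 2
    then have "c \<in> {u, v}"
      using cd(3) new_vertex_adjacent_iff[OF 2(2), of c] by (auto simp: insert_commute)
    then show ?thesis using 2 cd(1) step.IH by auto
  next
    case 3
    then show ?thesis using step.IH by blast
  next
    case 4
    then have d: "d \<in> {u, v}" using cd(3) new_vertex_adjacent_iff by auto
    obtain w where w: "w \<in> Y \<inter> {u, v}" "?conn w" using step.IH 4 by blast
    have "?conn d"
    proof (cases "w = d")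
      case False
      then have "{w, d} \<in> tree_edges Hs" using w d glue_edge by (auto simp: insert_commute)
      then show ?thesis using w d cd glue_neq conn_trans[OF w(2) conn_edge] by blast
    qed (use w in simp)
    then show ?thesis using 4 by blast
  qed
qed

lemma new_vertex_neighbours_adjacent:
  assumes "x \<in> new_vertices" "a \<noteq> b"
    and "{x, a} \<in> tree_edges (Hs @ [H])" "{x, b} \<in> tree_edges (Hs @ [H])"
  shows "{a, b} \<in> tree_edges (Hs @ [H])"
  using assms new_vertex_adjacent_iff[OF assms(1)] by (simp add: tree_edges_snoc)

lemma triangle_at_new_vertex:
  assumes "x \<in> new_vertices" "p \<notin> new_vertices" "p \<notin> Y" "{p, x} \<in> tree_edges (Hs @ [H])"
    and "y \<notin> H" "conn (tree_edges (Hs @ [H])) Y x y"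
  shows "\<exists>s\<in>Y. {s, p} \<in> tree_edges (Hs @ [H]) \<and> {s, x} \<in> tree_edges (Hs @ [H])"
proof -
  have "p \<in> H" using new_vertex_adjacent_iff[OF assms(1), of p] assms(4) by (simp add: insert_commute)
  then have "p \<in> {u, v}" using assms(2) by blast
  obtain w where w: "w \<in> Y" "w \<in> {u, v}"
    using conn_leaving_new_vertices[OF assms(6,1)] assms(5) by blast
  then have "{w, p} \<in> tree_edges (Hs @ [H])"
    using \<open>p \<in> {u, v}\<close> assms(3) glue_edge by (auto simp: tree_edges_snoc insert_commute)
  moreover have "{w, x} \<in> tree_edges (Hs @ [H])"
    using w assms(1) new_vertex_adjacent_iff[OF assms(1), of w] glue_mem by (auto simp: insert_commute)
  ultimately show ?thesis using w(1) by blast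
qed

end

lemma conn_neighbours_triangle:
  assumes "Kr_tree_seq r Hs" "p \<notin> Y" "a \<in> Y" "b \<in> Y" "a \<noteq> b"
    and "{p, a} \<in> tree_edges Hs" "{p, b} \<in> tree_edges Hs" "{a, b} \<notin> tree_edges Hs"
    and "conn (tree_edges Hs) Y a b"
  shows "\<exists>s\<in>Y. {s, p} \<in> tree_edges Hs \<and> ({s, a} \<in> tree_edges Hs \<or> {s, b} \<in> tree_edges Hs)"
  using assms
proof (induction Hs arbitrary: Y p a b rule: Kr_tree_induct)
  case (single H)
  then show ?case by (simp add: tree_edges_def)
next
  case (extend Hs H u v)
  interpret Kr_tree_extension r Hs H u v by fact
  let ?E = "tree_edges (Hs @ [H])"
  show ?case
  proof (cases "p \<in> new_vertices")
    case True
    then have "{a, b} \<in> ?E"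
      using extend.prems(4-6) by (rule new_vertex_neighbours_adjacent)
    then show ?thesis using extend.prems(7) by contradiction
  next
    case p: False
    consider "a \<in> new_vertices" | "b \<in> new_vertices" | "a \<notin> new_vertices" "b \<notin> new_vertices"
      by blast
    then show ?thesis
    proof cases
      case 1
      then have "b \<notin> H" using new_vertex_adjacent_iff[OF 1, of b] extend.prems(4,7) by blast
      then show ?thesis
        using triangle_at_new_vertex[OF 1 p extend.prems(1)] extend.prems(5,8) by blast
    next
      case 2
      then have "a \<notin> H"
        using new_vertex_adjacent_iff[OF 2, of a] extend.prems(4,7) by (auto simp: insert_commute)
      then show ?thesis
        using triangle_at_new_vertex[OF 2 p extend.prems(1)] extend.prems(6) conn_sym[OF extend.prems(8)]
        by blast
    next
      case 3
      then have "conn (tree_edges Hs) (Y - new_vertices) a b"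
        using conn_avoiding_new_vertices[OF extend.prems(8)] by blast
      moreover have "{p, a} \<in> tree_edges Hs" "{p, b} \<in> tree_edges Hs" "{a, b} \<notin> tree_edges Hs"
        using extend.prems(5-7) old_vertices_adjacent_iff p 3 by (auto simp: tree_edges_snoc)
      ultimately have "\<exists>s\<in>Y - new_vertices. {s, p} \<in> tree_edges Hs \<and>
          ({s, a} \<in> tree_edges Hs \<or> {s, b} \<in> tree_edges Hs)"
        using extend.IH[where Y = "Y - new_vertices"] extend.prems(1-4) 3 by blast
      then show ?thesis by (auto simp: tree_edges_snoc)
    qed
  qed
qed

section \<open>The potential and the core\<close>

definition potential :: "nat \<Rightarrow> 'a set set \<Rightarrow> 'a set \<Rightarrow> int" where
  "potential r E Y = 2 * int (card (E \<inter> edges_of Y)) - int (r + 1) * int (card Y)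
     - 2 * int (card (components E Y))"

lemma potential_union_ge:
  assumes "finite Y" "finite Z" "Y \<inter> Z = {}"
    and "New \<subseteq> E \<inter> edges_of (Y \<union> Z)" "New \<inter> edges_of Y = {}"
    and "card (components E (Y \<union> Z)) + d \<le> card (components E Y)"
  shows "potential r E (Y \<union> Z) \<ge>
    potential r E Y + 2 * int (card New) - int (r + 1) * int (card Z) + 2 * int d"
proof -
  have fin: "finite (E \<inter> edges_of (Y \<union> Z))" using assms(1,2) by (simp add: finite_edges_of)
  have "(E \<inter> edges_of Y) \<union> New \<subseteq> E \<inter> edges_of (Y \<union> Z)"
    using assms(4) edges_of_mono[of Y "Y \<union> Z"] by auto
  then have "card ((E \<inter> edges_of Y) \<union> New) \<le> card (E \<inter> edges_of (Y \<union> Z))"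
    using fin by (rule card_mono[rotated])
  moreover have "card ((E \<inter> edges_of Y) \<union> New) = card (E \<inter> edges_of Y) + card New"
    using assms(1,5) finite_subset[OF assms(4) fin] by (intro card_Un_disjoint) (auto simp: finite_edges_of)
  moreover have "card (Y \<union> Z) = card Y + card Z" using assms(1-3) by (simp add: card_Un_disjoint)
  ultimately show ?thesis using assms(6) unfolding potential_def by (simp add: algebra_simps)
qed

lemma two_mult_choose_two_int: "2 * int (n choose 2) = int n * (int n - 1)"
proof -
  have "2 * int (n choose 2) = int (n * (n - 1))"
    using two_mult_choose_two[of n] by (metis of_nat_mult of_nat_numeral)
  also have "\<dots> = int n * (int n - 1)" by (cases n) (simp_all add: algebra_simps)
  finally show ?thesis .
qed

lemma card_doubletons_image: "p \<notin> M \<Longrightarrow> card ((\<lambda>m. {p, m}) ` M) = card M"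
  by (intro card_image) (auto simp: inj_on_def doubleton_eq_iff)

lemma triangle_gain:
  fixes r j m :: nat
  assumes "2 \<le> j" "j < r" "j \<le> m" "3 \<le> m"
  shows "1 \<le> 2 * (int (r choose 2) - int (j choose 2)) + 2 * (int m - int j) - int (r + 1) * int (r - j)"
proof -
  have "2 * (int (r choose 2) - int (j choose 2)) = int r * (int r - 1) - int j * (int j - 1)"
    by (simp add: right_diff_distrib two_mult_choose_two_int)
  then have eq: "2 * (int (r choose 2) - int (j choose 2)) + 2 * (int m - int j) - int (r + 1) * int (r - j)
      = (int r - int j) * (int j - 2) + 2 * (int m - int j)"
    using assms by (simp add: algebra_simps of_nat_diff)
  show ?thesis
  proof (cases "j = 2")
    case False
    then have "1 * 1 \<le> (int r - int j) * (int j - 2)" using assms by (intro mult_mono) auto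
    then show ?thesis unfolding eq using assms by simp
  qed (use assms eq in simp)
qed

lemma block_pair_gain:
  fixes r j1 j2 :: nat
  assumes "1 \<le> j1" "j1 \<le> r - 2" "1 \<le> j2" "j2 \<le> r - 2"
  shows "2 \<le> 2 * (2 * int (r choose 2) - 1 - int (j1 choose 2) - int (j2 choose 2))
    - int (r + 1) * int (2 * r - 2 - (j1 + j2))"
proof -
  have "0 \<le> (int j1 - 1) * (int r + 1 - int j1)" "0 \<le> (int j2 - 1) * (int r + 1 - int j2)"
    using assms by (simp_all add: mult_nonneg_nonneg)
  moreover have "2 * (2 * int (r choose 2) - 1 - int (j1 choose 2) - int (j2 choose 2))
      - int (r + 1) * int (2 * r - 2 - (j1 + j2))
    = 2 + (int j1 - 1) * (int r + 1 - int j1) + (int j2 - 1) * (int r + 1 - int j2)"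
    using assms two_mult_choose_two_int[of r] two_mult_choose_two_int[of j1] two_mult_choose_two_int[of j2]
    by (simp add: of_nat_diff algebra_simps)
  ultimately show ?thesis by linarith
qed

locale Kr_tree_potential =
  fixes r :: nat and Hs :: "'a set list" and X :: "'a set"
  assumes Kr_tree: "Kr_tree_seq r Hs" and r_ge_5: "r \<ge> 5" and X_subset: "X \<subseteq> tree_vertices Hs"
begin

abbreviation TE :: "'a set set" where "TE \<equiv> tree_edges Hs"
abbreviation TV :: "'a set" where "TV \<equiv> tree_vertices Hs"
abbreviation neighbours_in :: "'a set \<Rightarrow> 'a \<Rightarrow> 'a set" where
  "neighbours_in Y p \<equiv> {z \<in> Y. {p, z} \<in> TE}"

definition admissible :: "'a set \<Rightarrow> bool" where
  "admissible Y \<longleftrightarrow> X \<subseteq> Y \<and> Y \<subseteq> TV \<and>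
     int (card Y) - int (card X) \<le> int (2 * r - 4) * (potential r TE Y - potential r TE X)"

definition improving :: "'a set \<Rightarrow> 'a set \<Rightarrow> bool" where
  "improving Y Z \<longleftrightarrow> Z \<subseteq> TV \<and> Y \<inter> Z = {} \<and> Z \<noteq> {} \<and> card Z \<le> 2 * r - 4 \<and>
     potential r TE Y + 1 \<le> potential r TE (Y \<union> Z)"

lemma admissible_subset: "admissible Y \<Longrightarrow> Y \<subseteq> TV"
  unfolding admissible_def by blast

lemma finite_admissible: "admissible Y \<Longrightarrow> finite Y"
  using admissible_subset finite_tree_vertices[OF Kr_tree] finite_subset by blast

lemma admissible_union:
  assumes "admissible Y" "improving Y Z"
  shows "admissible (Y \<union> Z)" "card Y < card (Y \<union> Z)"
proof -
  have fin: "finite Y" "finite Z"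
    using assms finite_admissible finite_tree_vertices[OF Kr_tree] finite_subset
    unfolding improving_def by blast+
  have card_Un: "card (Y \<union> Z) = card Y + card Z"
    using fin assms(2) unfolding improving_def by (simp add: card_Un_disjoint)
  have "int (card Z) \<le> int (2 * r - 4) * 1" using assms(2) unfolding improving_def by simp
  also have "\<dots> \<le> int (2 * r - 4) * (potential r TE (Y \<union> Z) - potential r TE Y)"
    using assms(2) unfolding improving_def by (intro mult_left_mono) simp_all
  moreover have "X \<subseteq> Y \<union> Z" "Y \<union> Z \<subseteq> TV"
    using assms unfolding admissible_def improving_def by auto
  ultimately show "admissible (Y \<union> Z)"
    using assms(1) card_Un unfolding admissible_def by (simp add: algebra_simps)
  show "card Y < card (Y \<union> Z)"
    using card_Un fin assms(2) unfolding improving_def by (simp add: card_gt_0_iff)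
qed

lemma ex_maximal_admissible: "\<exists>K. admissible K \<and> (\<forall>Y. admissible Y \<longrightarrow> card Y \<le> card K)"
proof -
  have "admissible X" unfolding admissible_def using X_subset by simp
  moreover have "card Y < card TV + 1" if "admissible Y" for Y
    using that finite_tree_vertices[OF Kr_tree] unfolding admissible_def
    by (simp add: card_mono less_Suc_eq_le)
  ultimately show ?thesis by (metis ex_has_greatest_nat)
qed

lemma card_admissible_le:
  assumes "admissible K"
  shows "card K \<le> (1 + (2 * r - 4) * (r + 3)) * card X"
proof -
  have fin: "finite K" "finite X" using assms finite_admissible X_subset
    finite_tree_vertices[OF Kr_tree] finite_subset by blast+
  have "2 * card (TE \<inter> edges_of K) \<le> (r + 1) * card K"
    using tree_edge_density[OF Kr_tree fin(1)] .
  then have "2 * int (card (TE \<inter> edges_of K)) \<le> int (r + 1) * int (card K)"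
    by (metis of_nat_le_iff of_nat_mult of_nat_numeral)
  then have "potential r TE K \<le> 0" unfolding potential_def by simp
  moreover have "potential r TE X \<ge> - int (r + 3) * int (card X)"
    using card_components_le[OF fin(2), of TE] unfolding potential_def by (simp add: algebra_simps)
  ultimately have "potential r TE K - potential r TE X \<le> int (r + 3) * int (card X)"
    by (simp add: algebra_simps)
  then have "int (card K) - int (card X) \<le> int (2 * r - 4) * (int (r + 3) * int (card X))"
    using assms unfolding admissible_def by (meson mult_left_mono of_nat_0_le_iff order_trans)
  moreover have "int ((1 + (2 * r - 4) * (r + 3)) * card X) =
      int (card X) + int (2 * r - 4) * (int (r + 3) * int (card X))"
    by (simp only: of_nat_mult of_nat_add of_nat_1 distrib_right mult_1_left mult.assoc)
  ultimately show ?thesis by linarith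
qed

lemma potential_union_block:
  assumes "finite Y" "B \<in> set Hs" "a \<in> B \<inter> Y"
    and "Extra \<subseteq> TE \<inter> edges_of (Y \<union> B)" "Extra \<inter> (edges_of B \<union> edges_of Y) = {}"
  shows "potential r TE Y + 2 * (int (r choose 2) - int (card (B \<inter> Y) choose 2)) + 2 * int (card Extra)
      - int (r + 1) * int (r - card (B \<inter> Y)) \<le> potential r TE (Y \<union> (B - Y))"
proof -
  have B: "finite B" "card B = r" using finite_block card_block Kr_tree assms(2) by blast+
  let ?New = "(edges_of B - edges_of Y) \<union> Extra"
  have "card (B \<inter> Y) \<le> r" using B by (metis card_mono inf_le1)
  then have "int (card (edges_of B - edges_of Y)) = int (r choose 2) - int (card (B \<inter> Y) choose 2)"
    using B by (simp add: card_edges_of_Diff of_nat_diff binomial_right_mono)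
  moreover have "card ?New = card (edges_of B - edges_of Y) + card Extra"
    using assms(5) B finite_subset[OF assms(4)] assms(1)
    by (intro card_Un_disjoint) (auto simp: finite_edges_of)
  moreover have "card (B - Y) = r - card (B \<inter> Y)" using B by (simp add: card_Diff_subset_Int Int_commute)
  moreover have "?New \<inter> edges_of Y = {}" using assms(5) by blast
  moreover have "?New \<subseteq> TE \<inter> edges_of (Y \<union> (B - Y))"
    using assms(4) edges_of_block_subset[OF assms(2)] edges_of_mono[of B "Y \<union> (B - Y)"] by auto
  moreover have "\<exists>y\<in>Y. {z, y} \<in> TE" if "z \<in> B - Y" for z
    using that assms(3) edges_of_block_subset[OF assms(2)] by (intro bexI[of _ a]) auto
  then have "card (components TE (Y \<union> (B - Y))) + 0 \<le> card (components TE Y)"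
    using card_components_union_le[OF assms(1), of "B - Y"] by simp
  ultimately show ?thesis
    using potential_union_ge[of Y "B - Y" ?New TE 0 r] assms(1) B by (simp add: algebra_simps)
qed

lemma improving_block_at_triangle:
  assumes "admissible Y" "p \<notin> Y" "3 \<le> card (neighbours_in Y p)"
    and "a \<in> neighbours_in Y p" "c \<in> neighbours_in Y p" "a \<noteq> c"
    and block: "B \<in> set Hs" "{p, a, c} \<subseteq> B"
  shows "improving Y (B - Y)"
proof -
  let ?M = "neighbours_in Y p"
  let ?Extra = "(\<lambda>m. {p, m}) ` (?M - B)"
  have Y: "finite Y" "Y \<subseteq> TV" using assms(1) finite_admissible admissible_subset by blast+
  have B: "finite B" "card B = r" using block(1) finite_block card_block Kr_tree by blast+
  define j where "j = card (B \<inter> Y)"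
  have BY: "B \<inter> Y \<subseteq> ?M"
  proof
    fix z
    assume z: "z \<in> B \<inter> Y"
    then have "{p, z} \<in> edges_of B" using block(2) assms(2) by auto
    then show "z \<in> ?M" using z edges_of_block_subset[OF block(1)] by auto
  qed
  have "card {a, c} \<le> j" unfolding j_def using block assms(4,5) B by (intro card_mono) auto
  then have "2 \<le> j" using assms(6) by simp
  moreover have "B \<inter> Y \<subset> B" using block assms(2) by blast
  then have "j < r" unfolding j_def using B by (metis psubset_card_mono)
  moreover have "j \<le> card ?M" unfolding j_def using BY Y by (simp add: card_mono)
  moreover have "card ?Extra = card ?M - j"
  proof -
    have "card (?M - B) = card ?M - card (?M \<inter> B)"
      using Y(1) by (intro card_Diff_subset_Int) auto
    moreover have "?M \<inter> B = B \<inter> Y" using BY by blast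
    ultimately show ?thesis using assms(2) by (simp add: card_doubletons_image j_def)
  qed
  moreover have "?Extra \<subseteq> TE \<inter> edges_of (Y \<union> B)" "?Extra \<inter> (edges_of B \<union> edges_of Y) = {}"
    using block assms(2) by (auto simp: insert_commute)
  moreover have "a \<in> B \<inter> Y" using block assms(4) by auto
  ultimately have "potential r TE Y + 1 \<le> potential r TE (Y \<union> (B - Y))"
    using potential_union_block[OF Y(1) block(1), of a ?Extra] triangle_gain[of j r "card ?M"] assms(3)
    unfolding j_def by (simp add: of_nat_diff)
  moreover have "card (B - Y) \<le> r" using B by (metis Diff_subset card_mono)
  then have "card (B - Y) \<le> 2 * r - 4" using r_ge_5 by linarith
  ultimately show ?thesis
    using block_subset_tree_vertices[OF block(1)] block assms(2) unfolding improving_def by auto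
qed

lemma improving_at_independent_neighbours:
  assumes "admissible Y" "p \<in> TV" "p \<notin> Y" "r \<le> 2 * card (neighbours_in Y p)"
    and "\<And>x y. x \<in> neighbours_in Y p \<Longrightarrow> y \<in> neighbours_in Y p \<Longrightarrow> {x, y} \<notin> TE"
  shows "improving Y {p}"
proof -
  let ?M = "neighbours_in Y p"
  have Y: "finite Y" "Y \<subseteq> TV" using assms(1) finite_admissible admissible_subset by blast+
  have "\<not> card ?M \<le> Suc 0" using assms(4) r_ge_5 by linarith
  then obtain a b where ab: "a \<in> ?M" "b \<in> ?M" "a \<noteq> b"
    using card_le_Suc0_iff_eq[of ?M] Y(1) by auto
  have not_conn: "\<not> conn TE Y a b"
  proof
    assume "conn TE Y a b"
    then obtain s where s: "s \<in> Y" "{s, p} \<in> TE" "{s, a} \<in> TE \<or> {s, b} \<in> TE"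
      using conn_neighbours_triangle[OF Kr_tree assms(3)] ab assms(5) by blast
    then have "s \<in> ?M" by (simp add: insert_commute)
    then show False using s(3) ab assms(5) by blast
  qed
  have "conn TE (Y \<union> {p}) a b"
    using ab conn_trans[OF conn_edge conn_edge, of a "Y \<union> {p}" p TE b] by (auto simp: insert_commute)
  moreover have "\<exists>y\<in>Y. {z, y} \<in> TE" if "z \<in> {p}" for z
    using that ab by auto
  ultimately have "card (components TE (Y \<union> {p})) < card (components TE Y)"
    using card_components_union_less[OF Y(1)] ab not_conn by blast
  then have "card (components TE (Y \<union> {p})) + 1 \<le> card (components TE Y)" by simp
  moreover let ?New = "(\<lambda>m. {p, m}) ` ?M"
  have "card ?New = card ?M" using assms(3) by (simp add: card_doubletons_image)
  moreover have "?New \<subseteq> TE \<inter> edges_of (Y \<union> {p})" "?New \<inter> edges_of Y = {}"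
    using assms(3) by auto
  ultimately have "potential r TE Y + 1 \<le> potential r TE (Y \<union> {p})"
    using potential_union_ge[OF Y(1), of "{p}" ?New TE 1 r] assms(3,4) by simp
  then show ?thesis using assms(2,3) r_ge_5 unfolding improving_def by simp
qed

lemma improving_at_vertex:
  assumes "admissible Y" "p \<in> TV" "p \<notin> Y" "r - 2 \<le> card (neighbours_in Y p)"
  shows "\<exists>Z. improving Y Z"
proof (cases "\<exists>a\<in>neighbours_in Y p. \<exists>c\<in>neighbours_in Y p. a \<noteq> c \<and> {a, c} \<in> TE")
  case True
  then obtain a c where ac: "a \<in> neighbours_in Y p" "c \<in> neighbours_in Y p" "a \<noteq> c" "{a, c} \<in> TE"
    by blast
  have "{x, y} \<in> TE" if "x \<in> {p, a, c}" "y \<in> {p, a, c}" "x \<noteq> y" for x y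
    using that ac by (auto simp: insert_commute)
  moreover have "{p, a, c} \<subseteq> TV" using assms(2) ac admissible_subset[OF assms(1)] by auto
  ultimately obtain B where "B \<in> set Hs" "{p, a, c} \<subseteq> B"
    using clique_in_block[OF Kr_tree] by meson
  then have "improving Y (B - Y)"
    using improving_block_at_triangle[OF assms(1,3) _ ac(1-3)] assms(4) r_ge_5 by simp
  then show ?thesis ..
next
  case False
  have "{x, y} \<notin> TE" if "x \<in> neighbours_in Y p" "y \<in> neighbours_in Y p" for x y
    using False that tree_edge_vertices[of x x Hs] by (cases "x = y") auto
  then have "improving Y {p}"
    using improving_at_independent_neighbours[OF assms(1-3)] assms(4) r_ge_5 by simp
  then show ?thesis ..
qed

lemma card_glued_blocks:
  assumes "B \<in> set Hs" "B' \<in> set Hs" "a \<noteq> b" "B \<inter> B' = {a, b}"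
  shows "card (B \<union> B') = 2 * r - 2" "card (edges_of B \<union> edges_of B') = 2 * (r choose 2) - 1"
proof -
  have B: "finite B" "card B = r" "finite B'" "card B' = r"
    using assms(1,2) finite_block card_block Kr_tree by blast+
  have "card (B \<union> B') + card (B \<inter> B') = card B + card B'" using B by (intro card_Un_Int[symmetric]) auto
  then show "card (B \<union> B') = 2 * r - 2" using B assms(3,4) by simp
  have "edges_of B \<inter> edges_of B' = {{a, b}}"
    using assms(3,4) by (simp add: edges_of_Int[symmetric] edges_of_doubleton)
  moreover have "card (edges_of B \<union> edges_of B') + card (edges_of B \<inter> edges_of B') =
      card (edges_of B) + card (edges_of B')"
    using B by (intro card_Un_Int[symmetric]) (auto simp: finite_edges_of)
  ultimately show "card (edges_of B \<union> edges_of B') = 2 * (r choose 2) - 1"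
    using B by (simp add: card_edges_of)
qed

lemma card_glued_blocks_new_edges:
  assumes "B \<in> set Hs" "B' \<in> set Hs" "a \<noteq> b" "B \<inter> B' = {a, b}"
  shows "2 * int (r choose 2) - 1 - int (card (B \<inter> Y) choose 2) - int (card (B' \<inter> Y) choose 2)
    \<le> int (card ((edges_of B \<union> edges_of B') - edges_of Y))"
proof -
  let ?EB = "edges_of B \<union> edges_of B'"
  have B: "finite B" "finite B'" using assms(1,2) finite_block Kr_tree by blast+
  have "?EB \<inter> edges_of Y = edges_of (B \<inter> Y) \<union> edges_of (B' \<inter> Y)" by (auto simp: edges_of_Int)
  then have "card (?EB \<inter> edges_of Y) \<le> (card (B \<inter> Y) choose 2) + (card (B' \<inter> Y) choose 2)"
    using card_Un_le[of "edges_of (B \<inter> Y)" "edges_of (B' \<inter> Y)"] B by (simp add: card_edges_of)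
  then show ?thesis
    using card_glued_blocks(2)[OF assms] B card_Diff_subset_Int[of ?EB "edges_of Y"]
      card_mono[of ?EB "?EB \<inter> edges_of Y"]
    by (simp add: finite_edges_of of_nat_diff)
qed

lemma card_block_Int_bounds:
  assumes "B \<in> set Hs" "a \<in> B" "b \<in> B" "a \<noteq> b" "a \<notin> Y" "b \<notin> Y" "B \<inter> Y \<noteq> {}"
  shows "1 \<le> card (B \<inter> Y)" "card (B \<inter> Y) \<le> r - 2"
proof -
  have B: "finite B" "card B = r" using assms(1) finite_block card_block Kr_tree by blast+
  then show "1 \<le> card (B \<inter> Y)" using assms(7) by (simp add: Suc_le_eq card_gt_0_iff)
  have "card (B \<inter> Y) \<le> card (B - {a, b})" using B assms(5,6) by (intro card_mono) auto
  also have "\<dots> = r - 2" using B assms(2-4) by (subst card_Diff_subset) auto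
  finally show "card (B \<inter> Y) \<le> r - 2" .
qed

lemma improving_at_block_pair:
  assumes "admissible Y" "B \<in> set Hs" "B' \<in> set Hs" "a \<noteq> b" "B \<inter> B' = {a, b}" "a \<notin> Y" "b \<notin> Y"
    and "B \<inter> Y \<noteq> {}" "B' \<inter> Y \<noteq> {}"
  shows "improving Y (B \<union> B' - Y)"
proof -
  let ?Z = "B \<union> B' - Y" and ?EB = "edges_of B \<union> edges_of B'"
  have Y: "finite Y" "Y \<subseteq> TV" using assms(1) finite_admissible admissible_subset by blast+
  have B: "finite B" "finite B'" using assms(2,3) finite_block Kr_tree by blast+
  define j1 j2 where "j1 = card (B \<inter> Y)" and "j2 = card (B' \<inter> Y)"
  have j: "1 \<le> j1" "j1 \<le> r - 2" "1 \<le> j2" "j2 \<le> r - 2"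
    unfolding j1_def j2_def using assms card_block_Int_bounds by (metis Int_iff insertI1 insertI2)+
  have "card ((B \<union> B') \<inter> Y) = j1 + j2"
    unfolding j1_def j2_def using B assms(5-7)
    by (subst card_Un_disjoint[symmetric]) (auto intro: arg_cong[where f = card])
  then have card_Z: "card ?Z = 2 * r - 2 - (j1 + j2)"
    using card_glued_blocks(1)[OF assms(2-5)] B by (simp add: card_Diff_subset_Int)
  have new: "2 * int (r choose 2) - 1 - int (j1 choose 2) - int (j2 choose 2) \<le>
      int (card (?EB - edges_of Y))"
    unfolding j1_def j2_def by (rule card_glued_blocks_new_edges[OF assms(2-5)])
  have sub: "?EB - edges_of Y \<subseteq> TE \<inter> edges_of (Y \<union> ?Z)"
    using edges_of_block_subset[OF assms(2)] edges_of_block_subset[OF assms(3)]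
      edges_of_mono[of B "Y \<union> ?Z"] edges_of_mono[of B' "Y \<union> ?Z"] by auto
  have "\<exists>y\<in>Y. {z, y} \<in> TE" if z: "z \<in> ?Z" for z
  proof -
    obtain x x' where x: "x \<in> B \<inter> Y" "x' \<in> B' \<inter> Y" using assms(8,9) by blast
    then have "{z, x} \<in> edges_of B \<or> {z, x'} \<in> edges_of B'" using z by auto
    then show ?thesis
      using x edges_of_block_subset[OF assms(2)] edges_of_block_subset[OF assms(3)] by blast
  qed
  then have "card (components TE (Y \<union> ?Z)) + 0 \<le> card (components TE Y)"
    using card_components_union_le[OF Y(1), of ?Z] by simp
  moreover have "finite ?Z" "Y \<inter> ?Z = {}" "(?EB - edges_of Y) \<inter> edges_of Y = {}" using B by auto
  ultimately have "potential r TE Y + (2 * int (card (?EB - edges_of Y)) - int (r + 1) * int (card ?Z))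
      \<le> potential r TE (Y \<union> ?Z)"
    using potential_union_ge[OF Y(1) _ _ sub, of 0 r] by simp
  moreover have "2 \<le> 2 * (2 * int (r choose 2) - 1 - int (j1 choose 2) - int (j2 choose 2))
      - int (r + 1) * int (card ?Z)"
    unfolding card_Z by (rule block_pair_gain[OF j])
  then have "1 \<le> 2 * int (card (?EB - edges_of Y)) - int (r + 1) * int (card ?Z)"
    using new by simp
  ultimately have "potential r TE Y + 1 \<le> potential r TE (Y \<union> ?Z)"
    by (meson add_left_mono order_trans)
  moreover have "?Z \<subseteq> TV"
    using block_subset_tree_vertices[OF assms(2)] block_subset_tree_vertices[OF assms(3)] by blast
  moreover have "a \<in> ?Z" using assms(5,6) by blast
  ultimately show ?thesis using card_Z j unfolding improving_def by auto
qed

lemma core_exists: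
  "\<exists>K. X \<subseteq> K \<and> K \<subseteq> TV \<and> card K \<le> (1 + (2 * r - 4) * (r + 3)) * card X \<and>
     (\<forall>p \<in> TV - K. card (neighbours_in K p) < r - 2) \<and>
     (\<forall>B\<in>set Hs. \<forall>B'\<in>set Hs. \<forall>a b. a \<noteq> b \<and> B \<inter> B' = {a, b} \<and> a \<notin> K \<and> b \<notin> K \<longrightarrow>
        B \<inter> K = {} \<or> B' \<inter> K = {})"
proof -
  obtain K where K: "admissible K" and max: "\<And>Y. admissible Y \<Longrightarrow> card Y \<le> card K"
    using ex_maximal_admissible by blast
  have not_improving: "\<not> improving K Z" for Z
    using admissible_union[OF K] max by (meson not_le)
  have "X \<subseteq> K" using K unfolding admissible_def by blast
  moreover have "\<forall>p \<in> TV - K. card (neighbours_in K p) < r - 2"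
  proof
    fix p
    assume "p \<in> TV - K"
    then show "card (neighbours_in K p) < r - 2"
      using improving_at_vertex[OF K, of p] not_improving by force
  qed
  moreover have "\<forall>B\<in>set Hs. \<forall>B'\<in>set Hs. \<forall>a b. a \<noteq> b \<and> B \<inter> B' = {a, b} \<and> a \<notin> K \<and> b \<notin> K \<longrightarrow>
      B \<inter> K = {} \<or> B' \<inter> K = {}"
    using improving_at_block_pair[OF K] not_improving by blast
  ultimately show ?thesis using card_admissible_le[OF K] admissible_subset[OF K] by blast
qed

end

section \<open>The dynamics and the core\<close>

lemma dyn_step_rtranclp_mono: "(dyn_step r V)\<^sup>*\<^sup>* F0 F \<Longrightarrow> F0 \<subseteq> F"
  by (induction rule: rtranclp_induct) (auto simp: dyn_step_def)

text \<open>\<open>L\<close> is the edge set that the dynamics started from G together with T never leaves.\<close>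

locale Kr_tree_core =
  fixes r :: nat and Hs :: "'a set list" and VG :: "'a set" and EG :: "'a set set" and K :: "'a set"
  assumes Kr_tree: "Kr_tree_seq r Hs" and r_ge_5: "r \<ge> 5" and G_graph: "graph VG EG"
    and core_contains: "tree_vertices Hs \<inter> VG \<subseteq> K" and core_subset: "K \<subseteq> tree_vertices Hs"
    and few_core_neighbours:
      "\<forall>p \<in> tree_vertices Hs - K. card {z \<in> K. {p, z} \<in> tree_edges Hs} < r - 2"
    and glued_blocks_avoid_core:
      "\<forall>B\<in>set Hs. \<forall>B'\<in>set Hs. \<forall>a b. a \<noteq> b \<and> B \<inter> B' = {a, b} \<and> a \<notin> K \<and> b \<notin> K \<longrightarrow>
        B \<inter> K = {} \<or> B' \<inter> K = {}"
begin

abbreviation TE :: "'a set set" where "TE \<equiv> tree_edges Hs"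
abbreviation TV :: "'a set" where "TV \<equiv> tree_vertices Hs"
abbreviation W :: "'a set" where "W \<equiv> VG \<union> K"
abbreviation L :: "'a set set" where "L \<equiv> TE \<union> edges_of W"

lemma outer_edge_in_tree: "x \<notin> W \<Longrightarrow> {x, y} \<in> L \<Longrightarrow> {x, y} \<in> TE"
  by auto

lemma pair_with_outer_in_tree:
  assumes "\<And>f. f \<in> edges_of S \<Longrightarrow> f \<noteq> e \<Longrightarrow> f \<in> L"
    and "x \<in> S" "y \<in> S" "x \<noteq> y" "x \<notin> W \<or> y \<notin> W" "{x, y} \<noteq> e"
  shows "{x, y} \<in> TE"
  using assms(2-6) assms(1)[of "{x, y}"] outer_edge_in_tree[of x y] outer_edge_in_tree[of y x]
  by (auto simp: insert_commute)

lemma card_core_neighbours_less: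
  assumes "p \<in> TV" "p \<notin> K" "Q \<subseteq> W" "\<And>z. z \<in> Q \<Longrightarrow> {p, z} \<in> TE"
  shows "card Q < r - 2"
proof -
  have "Q \<subseteq> {z \<in> K. {p, z} \<in> TE}"
  proof
    fix z
    assume z: "z \<in> Q"
    then have "{p, z} \<in> TE" by (rule assms(4))
    moreover from this have "z \<in> TV" using tree_edge_vertices[of p z] by blast
    ultimately show "z \<in> {z \<in> K. {p, z} \<in> TE}" using z assms(3) core_contains by blast
  qed
  moreover have "finite K" using core_subset finite_tree_vertices[OF Kr_tree] by (rule finite_subset)
  ultimately have "card Q \<le> card {z \<in> K. {p, z} \<in> TE}" by (simp add: card_mono)
  moreover have "card {z \<in> K. {p, z} \<in> TE} < r - 2" using few_core_neighbours assms(1,2) by blast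
  ultimately show ?thesis by linarith
qed

lemma card_outer_le_2:
  assumes "p \<in> S" "q \<in> S" "p \<noteq> q" "{p, q} \<notin> TE"
    and "\<And>f. f \<in> edges_of S \<Longrightarrow> f \<noteq> {p, q} \<Longrightarrow> f \<in> L"
  shows "card (S - W - {p, q}) \<le> 2"
proof (rule card_le_2_if_common_neighbours[OF Kr_tree assms(3,4)])
  fix z
  assume "z \<in> S - W - {p, q}"
  then have "{z, p} \<in> TE" "{z, q} \<in> TE"
    using assms(1,2) pair_with_outer_in_tree[where S = S and e = "{p, q}", OF assms(5), of z]
    by (auto simp: doubleton_eq_iff)
  then show "{p, z} \<in> TE \<and> {q, z} \<in> TE" by (simp add: insert_commute)
qed

lemma card_outer_neighbours_less:
  assumes "S \<subseteq> VG \<union> TV" "z \<in> S" "z \<notin> W" "Q \<subseteq> S \<inter> W" "\<And>y. y \<in> Q \<Longrightarrow> {z, y} \<noteq> e"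
    and "\<And>f. f \<in> edges_of S \<Longrightarrow> f \<noteq> e \<Longrightarrow> f \<in> L"
  shows "card Q < r - 2"
proof (rule card_core_neighbours_less)
  show "z \<in> TV" "z \<notin> K" using assms(1-3) by auto
  show "Q \<subseteq> W" using assms(4) by blast
  fix y
  assume "y \<in> Q"
  then show "{z, y} \<in> TE"
    using assms(2-5) pair_with_outer_in_tree[where S = S and e = e, OF assms(6), of z y] by auto
qed

text \<open>The two cliques lie in blocks containing k and q respectively; if p and q were not adjacent,
  these blocks would be distinct, glued along ab outside K, and both meet K.\<close>

lemma adjacent_if_glued_outside_core:
  assumes "p \<notin> K" "a \<notin> K" "b \<notin> K" "k \<in> K" "q \<in> K" "p \<noteq> a" "p \<noteq> b" "a \<noteq> b"
    and "\<And>x y. x \<in> {p, a, b, k} \<Longrightarrow> y \<in> {p, a, b, k} \<Longrightarrow> x \<noteq> y \<Longrightarrow> {x, y} \<in> TE"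
    and "\<And>x y. x \<in> {q, a, b} \<Longrightarrow> y \<in> {q, a, b} \<Longrightarrow> x \<noteq> y \<Longrightarrow> {x, y} \<in> TE"
  shows "{p, q} \<in> TE"
proof (rule ccontr)
  assume pq: "{p, q} \<notin> TE"
  have "{p, a, b, k} \<subseteq> TV" "{q, a, b} \<subseteq> TV"
    using assms(9)[of p a] assms(9)[of a p] assms(9)[of k p] assms(9)[of b p]
      assms(10)[of q a] assms(10)[of a q] assms(10)[of b q] assms(1,4-7)
      tree_edge_vertices[of p a] tree_edge_vertices[of a q] tree_edge_vertices[of p b] tree_edge_vertices[of p k]
    by (auto simp: insert_commute)
  then obtain B B' where B: "B \<in> set Hs" "{p, a, b, k} \<subseteq> B" and B': "B' \<in> set Hs" "{q, a, b} \<subseteq> B'"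
    using clique_in_block[OF Kr_tree] assms(9,10) by meson
  have "q \<notin> B"
  proof
    assume "q \<in> B"
    then have "{p, q} \<in> edges_of B" using B(2) assms(1,5) by auto
    then show False using pq edges_of_block_subset[OF B(1)] by blast
  qed
  then have "B \<noteq> B'" using B' by blast
  then have "card (B \<inter> B') \<le> 2" by (rule card_block_Int_le_2[OF Kr_tree B(1) B'(1)])
  moreover have "{a, b} \<subseteq> B \<inter> B'" "finite (B \<inter> B')"
    using B B' finite_block[OF Kr_tree B(1)] by auto
  ultimately have "B \<inter> B' = {a, b}" using assms(8) by (metis card_2_iff card_seteq)
  then have "B \<inter> K = {} \<or> B' \<inter> K = {}"
    using glued_blocks_avoid_core B(1) B'(1) assms(2,3,8) by blast
  then show False using B(2) B'(2) assms(4,5) by blast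
qed

lemma partner_in_W:
  assumes "card S = r" "p \<in> S" "q \<in> S" "p \<noteq> q" "p \<notin> W" "{p, q} \<notin> TE"
    and other: "\<And>f. f \<in> edges_of S \<Longrightarrow> f \<noteq> {p, q} \<Longrightarrow> f \<in> L"
  shows "q \<in> W"
proof (rule ccontr)
  assume "q \<notin> W"
  then have "card (S - {p, q}) \<le> 2"
    using pair_with_outer_in_tree[OF other, where x = p] pair_with_outer_in_tree[OF other, where x = q]
      assms(2,3,5)
    by (intro card_le_2_if_common_neighbours[OF Kr_tree assms(4,6)]) (auto simp: doubleton_eq_iff)
  moreover have "finite S" using assms(1) r_ge_5 card.infinite by fastforce
  then have "card (S - {p, q}) = r - 2" using assms(1-4) by (subst card_Diff_subset) auto
  ultimately show False using r_ge_5 by linarith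
qed

lemma tree_edge_if_two_outer:
  assumes other: "\<And>f. f \<in> edges_of S \<Longrightarrow> f \<noteq> {p, q} \<Longrightarrow> f \<in> L"
    and "{p, q, a, b, k} \<subseteq> S" "distinct [p, q, a, b]" "k \<noteq> q"
    and "p \<notin> W" "a \<notin> W" "b \<notin> W" "q \<in> W" "k \<in> W"
  shows "{p, q} \<in> TE"
proof -
  have clique1: "{x, y} \<in> TE" if "x \<in> {p, a, b, k}" "y \<in> {p, a, b, k}" "x \<noteq> y" for x y
  proof (rule pair_with_outer_in_tree[OF other])
    show "x \<in> S" "y \<in> S" "x \<noteq> y" using that assms(2) by auto
    show "x \<notin> W \<or> y \<notin> W" using that assms(5-7) by blast
    have "q \<notin> {x, y}" using that assms(3,4) by auto
    then show "{x, y} \<noteq> {p, q}" by blast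
  qed
  have clique2: "{x, y} \<in> TE" if "x \<in> {q, a, b}" "y \<in> {q, a, b}" "x \<noteq> y" for x y
  proof (rule pair_with_outer_in_tree[OF other])
    show "x \<in> S" "y \<in> S" "x \<noteq> y" using that assms(2) by auto
    show "x \<notin> W \<or> y \<notin> W" using that assms(6,7) by blast
    have "p \<notin> {x, y}" using that assms(3) by auto
    then show "{x, y} \<noteq> {p, q}" by blast
  qed
  have "k \<in> TV" "q \<in> TV"
    using tree_edge_vertices[of p k Hs] tree_edge_vertices[of a q Hs] clique1[of p k] clique2[of a q]
      assms(3,5,9) by auto
  then have "k \<in> K" "q \<in> K" using assms(8,9) core_contains by auto
  moreover have "p \<notin> K" "a \<notin> K" "b \<notin> K" "p \<noteq> a" "p \<noteq> b" "a \<noteq> b" using assms(3,5-7) by auto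
  ultimately show ?thesis
    using adjacent_if_glued_outside_core[OF _ _ _ _ _ _ _ _ clique1 clique2] by blast
qed

lemma L_closed_at_outer_vertex:
  assumes S: "S \<subseteq> VG \<union> TV" "card S = r"
    and pq: "p \<in> S" "q \<in> S" "p \<noteq> q" "p \<notin> W" "{p, q} \<notin> L"
    and other: "\<And>f. f \<in> edges_of S \<Longrightarrow> f \<noteq> {p, q} \<Longrightarrow> f \<in> L"
  shows False
proof -
  have fin: "finite S" using S(2) r_ge_5 card.infinite by fastforce
  have pq_tree: "{p, q} \<notin> TE" using pq(5) by blast
  have "q \<in> W" by (rule partner_in_W[OF S(2) pq(1-4) pq_tree other])
  then have outer: "S - W = insert p (S - W - {p, q})" using pq(1,4) by blast
  have "card (S - W - {p, q}) \<le> 2" by (rule card_outer_le_2[OF pq(1-3) pq_tree other])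
  then consider "S - W - {p, q} = {}" | a where "S - W - {p, q} = {a}"
    | a b where "a \<noteq> b" "S - W - {p, q} = {a, b}"
    using card_le_2_cases fin by (meson finite_Diff)
  then show False
  proof cases
    case 1
    then have "S - {p, q} \<subseteq> S \<inter> W" by blast
    moreover have "{p, y} \<noteq> {p, q}" if "y \<in> S - {p, q}" for y
      using that by (auto simp: doubleton_eq_iff)
    ultimately have "card (S - {p, q}) < r - 2"
      by (rule card_outer_neighbours_less[OF S(1) pq(1,4) _ _ other])
    moreover have "card (S - {p, q}) = r - 2" using fin pq(1-3) S(2) by (subst card_Diff_subset) auto
    ultimately show False by simp
  next
    case (2 a)
    then have "S \<inter> W = S - {p, a}" using outer by blast
    have a: "a \<in> S" "a \<notin> W" "a \<notin> {p, q}" using 2 by blast+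
    then have "card (S \<inter> W) < r - 2"
      by (intro card_outer_neighbours_less[OF S(1), of a _ "{p, q}"] other) (auto simp: doubleton_eq_iff)
    moreover have "card (S - {p, a}) = r - 2" using a fin S(2) pq(1) by (subst card_Diff_subset) auto
    ultimately show False using \<open>S \<inter> W = S - {p, a}\<close> by simp
  next
    case (3 a b)
    then have ab: "a \<in> S" "b \<in> S" "a \<notin> W" "b \<notin> W" "a \<notin> {p, q}" "b \<notin> {p, q}" by blast+
    have "S \<inter> W = S - {p, a, b}" using 3 outer by blast
    moreover have "card (S - {p, a, b}) = r - 3" using ab 3(1) fin S(2) pq(1) by (subst card_Diff_subset) auto
    ultimately have "\<not> card (S \<inter> W) \<le> card {q}" using r_ge_5 by simp
    then have "\<not> S \<inter> W \<subseteq> {q}" using card_mono[of "{q}" "S \<inter> W"] by blast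
    then obtain k where k: "k \<in> S" "k \<in> W" "k \<noteq> q" by blast
    have "{p, q, a, b, k} \<subseteq> S" "distinct [p, q, a, b]" using ab 3(1) k pq(1-3) by auto
    then have "{p, q} \<in> TE"
      using tree_edge_if_two_outer[OF other _ _ k(3) pq(4) ab(3,4) \<open>q \<in> W\<close> k(2)] by blast
    then show False using pq_tree by contradiction
  qed
qed

lemma L_closed:
  assumes "S \<subseteq> VG \<union> TV" "card S = r" "e \<in> edges_of S"
    and "\<And>f. f \<in> edges_of S \<Longrightarrow> f \<noteq> e \<Longrightarrow> f \<in> L"
  shows "e \<in> L"
proof (rule ccontr)
  assume e: "e \<notin> L"
  obtain p q where pq: "p \<noteq> q" "e = {p, q}" "p \<in> S" "q \<in> S" using assms(3) by (rule edges_ofE)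
  then have "p \<notin> W \<or> q \<notin> W" using e by auto
  then show False
  proof
    assume "p \<notin> W"
    then show False using L_closed_at_outer_vertex[OF assms(1,2) pq(3,4,1)] assms(4) e pq(2) by blast
  next
    assume "q \<notin> W"
    moreover have "e = {q, p}" using pq(2) by auto
    ultimately show False using L_closed_at_outer_vertex[OF assms(1,2) pq(4,3) pq(1)[symmetric]] assms(4) e
      by blast
  qed
qed

lemma dynamics_within_L:
  assumes "(dyn_step r (VG \<union> TV))\<^sup>*\<^sup>* F0 F" "F0 \<subseteq> L"
  shows "F \<subseteq> L"
  using assms(1)
proof (induction rule: rtranclp_induct)
  case (step F F')
  then obtain S e where "S \<subseteq> VG \<union> TV" "card S = r" "e \<in> edges_of S"
    "\<forall>f\<in>edges_of S. f \<noteq> e \<longrightarrow> f \<in> F" "F' = insert e F"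
    unfolding dyn_step_def by blast
  then show ?case using L_closed[of S e] step.IH by blast
qed (use assms(2) in simp)

lemma completed_copy_inside_core:
  assumes "completed_copy r (VG \<union> TV) (EG \<union> TE) S"
  shows "S \<inter> TV \<subseteq> K"
proof
  fix y
  assume y: "y \<in> S \<inter> TV"
  obtain F e where S: "S \<subseteq> VG \<union> TV" "card S = r" and F: "(dyn_step r (VG \<union> TV))\<^sup>*\<^sup>* (EG \<union> TE) F"
    and e: "e \<in> edges_of S" "e \<notin> F" and other: "\<forall>f\<in>edges_of S. f \<noteq> e \<longrightarrow> f \<in> F"
    using assms unfolding completed_copy_def by blast
  have "EG \<union> TE \<subseteq> L" using G_graph unfolding graph_def edges_of_def by auto
  then have FL: "EG \<union> TE \<subseteq> F" "F \<subseteq> L"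
    using dyn_step_rtranclp_mono[OF F] dynamics_within_L[OF F] by auto
  have other_L: "f \<in> L" if "f \<in> edges_of S" "f \<noteq> e" for f using other FL(2) that by blast
  then have "e \<in> L" by (rule L_closed[OF S e(1)])
  then have all_L: "f \<in> L" if "f \<in> edges_of S" for f using other_L that by blast
  obtain p q where pq: "p \<noteq> q" "e = {p, q}" "p \<in> S" "q \<in> S" using e(1) by (rule edges_ofE)
  have "e \<notin> TE" using e(2) FL by blast
  then have "p \<in> W" "q \<in> W" using all_L[OF e(1)] pq(2) by auto
  show "y \<in> K"
  proof (rule ccontr)
    assume "y \<notin> K"
    then have "y \<notin> W" using y core_contains by blast
    have fin: "finite S" using S(2) r_ge_5 card.infinite by fastforce
    have "card (S - W - {p, q}) \<le> 2"
      using \<open>e \<notin> TE\<close> pq(2) all_L by (intro card_outer_le_2[OF pq(3,4,1)]) auto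
    moreover have "S - W - {p, q} = S - W" using \<open>p \<in> W\<close> \<open>q \<in> W\<close> by blast
    ultimately have "card (S - W) \<le> 2" by simp
    moreover have "card (S \<inter> W) + card (S - W) = r" using fin S(2) by (metis card_Int_Diff)
    moreover have "card (S \<inter> W) < r - 2"
    proof (rule card_outer_neighbours_less[OF S(1), of y _ e])
      show "y \<in> S" "y \<notin> W" using y \<open>y \<notin> W\<close> by auto
      show "{y, w} \<noteq> e" if "w \<in> S \<inter> W" for w using pq(2) \<open>p \<in> W\<close> \<open>q \<in> W\<close> \<open>y \<notin> W\<close> by auto
    qed (use all_L in auto)
    ultimately show False by linarith
  qed
qed

lemma card_completed_tree_edges_le:
  "card {e \<in> TE. \<exists>S. completed_copy r (VG \<union> TV) (EG \<union> TE) S \<and> e \<subseteq> S} \<le> (r + 1) * card K"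
proof -
  have fin: "finite K" using core_subset finite_tree_vertices[OF Kr_tree] by (rule finite_subset)
  have "{e \<in> TE. \<exists>S. completed_copy r (VG \<union> TV) (EG \<union> TE) S \<and> e \<subseteq> S} \<subseteq> TE \<inter> edges_of K"
    using completed_copy_inside_core tree_edges_subset unfolding edges_of_def by blast
  then have "card {e \<in> TE. \<exists>S. completed_copy r (VG \<union> TV) (EG \<union> TE) S \<and> e \<subseteq> S}
      \<le> card (TE \<inter> edges_of K)"
    using fin by (intro card_mono) (auto simp: finite_edges_of)
  moreover have "2 * card (TE \<inter> edges_of K) \<le> (r + 1) * card K"
    by (rule tree_edge_density[OF Kr_tree fin])
  ultimately show ?thesis by linarith
qed

end

lemma card_completed_tree_edges_bound:
  assumes "Kr_tree_seq r Hs" "r \<ge> 5" "graph VG EG"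
  shows "card {e \<in> tree_edges Hs. \<exists>S. completed_copy r (VG \<union> tree_vertices Hs) (EG \<union> tree_edges Hs) S
      \<and> e \<subseteq> S} \<le> (r + 1) * (1 + (2 * r - 4) * (r + 3)) * card (tree_vertices Hs \<inter> VG)"
proof -
  have "Kr_tree_potential r Hs (tree_vertices Hs \<inter> VG)"
    using assms(1,2) by unfold_locales auto
  from Kr_tree_potential.core_exists[OF this]
  obtain K where K: "tree_vertices Hs \<inter> VG \<subseteq> K" "K \<subseteq> tree_vertices Hs"
    "card K \<le> (1 + (2 * r - 4) * (r + 3)) * card (tree_vertices Hs \<inter> VG)"
    "\<forall>p \<in> tree_vertices Hs - K. card {z \<in> K. {p, z} \<in> tree_edges Hs} < r - 2"
    "\<forall>B\<in>set Hs. \<forall>B'\<in>set Hs. \<forall>a b. a \<noteq> b \<and> B \<inter> B' = {a, b} \<and> a \<notin> K \<and> b \<notin> K \<longrightarrow>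
        B \<inter> K = {} \<or> B' \<inter> K = {}"
    by (elim exE conjE) (rule that, assumption+)
  interpret Kr_tree_core r Hs VG EG K
    using assms K by unfold_locales
  have "card {e \<in> tree_edges Hs. \<exists>S. completed_copy r (VG \<union> tree_vertices Hs) (EG \<union> tree_edges Hs) S
      \<and> e \<subseteq> S} \<le> (r + 1) * card K"
    by (rule card_completed_tree_edges_le)
  also have "\<dots> \<le> (r + 1) * ((1 + (2 * r - 4) * (r + 3)) * card (tree_vertices Hs \<inter> VG))"
    using K(3) by (rule mult_le_mono2)
  finally show ?thesis by (simp only: mult.assoc)
qed

theorem lemma6p7:
  fixes r :: nat
  assumes "r \<ge> 5"
  shows "\<exists>C::real. \<forall>(Hs :: nat set list) (VG :: nat set) (EG :: nat set set).
           Kr_tree_seq r Hs \<longrightarrow> graph VG EG \<longrightarrow>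
           real (card {e \<in> tree_edges Hs.
                   \<exists>S. completed_copy r (VG \<union> tree_vertices Hs) (EG \<union> tree_edges Hs) S
                       \<and> e \<subseteq> S})
             \<le> C * real (card (tree_vertices Hs \<inter> VG))"
proof (intro exI allI impI)
  fix Hs :: "nat set list" and VG :: "nat set" and EG :: "nat set set"
  assume "Kr_tree_seq r Hs" "graph VG EG"
  from card_completed_tree_edges_bound[OF this(1) assms this(2)]
  show "real (card {e \<in> tree_edges Hs.
                   \<exists>S. completed_copy r (VG \<union> tree_vertices Hs) (EG \<union> tree_edges Hs) S
                       \<and> e \<subseteq> S})
             \<le> real ((r + 1) * (1 + (2 * r - 4) * (r + 3))) * real (card (tree_vertices Hs \<inter> VG))"
    by (simp only: of_nat_mult[symmetric] of_nat_le_iff)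
qed

end
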